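(* Let $f$ be a probability density on $\mathbb{R}$ with $f\in\mathbb{L}_2$ and $f(x)=f(-x)$ for all $x\in\mathbb{R}$. Let $\Theta$ be a compact subset of $(0,1/2)\times(\mathbb{R}^2\setminus\Delta)$, where $\Delta=\{(x,x):x\in\mathbb{R}\}$, and let $\theta_0=(p_0,\alpha_0,\beta_0)\in\Theta$. Let $g(x)=p_0f(x-\alpha_0)+(1-p_0)f(x-\beta_0)$, $x\in\mathbb{R}$. For $\theta=(p,\alpha,\beta)\in\Theta$ and $u\in\mathbb{R}$ put $M(\theta,u)=pe^{iu\alpha}+(1-p)e^{iu\beta}$. Then, for $\theta\in\Theta$, we have $\mathrm{Im}\left(g^*(u)/M(\theta,u)\right)=0$ for all $u\in\mathbb{R}$ if and only if $\theta=\theta_0$.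
   Context: For an integrable function $f$, $f^*(u)=\int_{\mathbb{R}}e^{ixu}f(x)\,dx$ denotes its Fourier transform. Since $p<1/2$ on $\Theta$, $M(\theta,u)\neq 0$ for all $u$. *)

theory Defs
  imports "HOL-Analysis.Analysis"
begin

definition fourier_tr :: "(real \<Rightarrow> real) \<Rightarrow> real \<Rightarrow> complex" where
  "fourier_tr f u = (LINT x|lborel. exp (\<i> * complex_of_real (x * u)) * complex_of_real (f x))"

definition prob_density :: "(real \<Rightarrow> real) \<Rightarrow> bool" where
  "prob_density f \<longleftrightarrow> f \<in> borel_measurable lborel \<and> (\<forall>x. 0 \<le> f x)
     \<and> integrable lborel f \<and> (LINT x|lborel. f x) = 1"

definition square_integrable :: "(real \<Rightarrow> real) \<Rightarrow> bool" where
  "square_integrable f \<longleftrightarrow> f \<in> borel_measurable lborel \<and> integrable lborel (\<lambda>x. (f x)\<^sup>2)"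

definition mix_M :: "real \<times> real \<times> real \<Rightarrow> real \<Rightarrow> complex" where
  "mix_M \<theta> u = (case \<theta> of (p, \<alpha>, \<beta>) \<Rightarrow>
      complex_of_real p * exp (\<i> * complex_of_real (u * \<alpha>))
      + complex_of_real (1 - p) * exp (\<i> * complex_of_real (u * \<beta>)))"

end

theory Submission
  imports Defs "HOL-Complex_Analysis.Complex_Analysis" "HOL-Real_Asymp.Real_Asymp"
begin

text \<open>
  Since \<open>f\<close> is even, its Fourier transform is real; it equals 1 at 0, so it does not vanish
  near 0. As \<open>g\<^sup>* = M(\<theta>\<^sub>0,\<cdot>) f\<^sup>*\<close>, the hypothesis forces \<open>Im (M(\<theta>\<^sub>0,u) * cnj (M(\<theta>,u))) = 0\<close>
  near \<open>u = 0\<close>. That function is a real combination \<open>\<Sum>\<^sub>k c\<^sub>k sin (d\<^sub>k u)\<close> of four sines; by analytic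
  continuation it vanishes on the imaginary axis too, i.e. \<open>\<Sum>\<^sub>k c\<^sub>k sinh (d\<^sub>k y) = 0\<close> for all \<open>y\<close>.
  Once each parameter is written with its larger location first, only two of the exponents \<open>d\<^sub>k\<close>
  can have maximal modulus, and comparing the dominant exponentials as \<open>y \<rightarrow> \<infinity>\<close> identifies the
  parameters.
\<close>

lemma integrable_fourier_integrand:
  assumes "integrable lborel f"
  shows "integrable lborel (\<lambda>x. exp (\<i> * complex_of_real (x * u)) * complex_of_real (f x))"
proof (rule Bochner_Integration.integrable_bound[OF integrable_of_real[OF assms, where 'a = complex]])
  show "(\<lambda>x. exp (\<i> * complex_of_real (x * u)) * complex_of_real (f x)) \<in> borel_measurable lborel"
    using borel_measurable_integrable[OF assms] by measurable
qed (simp add: norm_mult norm_exp_i_times)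

lemma fourier_tr_lincomb:
  assumes "integrable lborel f" "integrable lborel h"
  shows "fourier_tr (\<lambda>x. a * f x + b * h x) u
    = complex_of_real a * fourier_tr f u + complex_of_real b * fourier_tr h u"
proof -
  have "fourier_tr (\<lambda>x. a * f x + b * h x) u
      = (LINT x|lborel. complex_of_real a * (exp (\<i> * complex_of_real (x * u)) * complex_of_real (f x))
          + complex_of_real b * (exp (\<i> * complex_of_real (x * u)) * complex_of_real (h x)))"
    unfolding fourier_tr_def by (simp add: algebra_simps)
  also have "\<dots> = complex_of_real a * fourier_tr f u + complex_of_real b * fourier_tr h u"
    unfolding fourier_tr_def
    by (simp only: Bochner_Integration.integral_add integral_mult_right_zero
        integrable_mult_right integrable_fourier_integrand assms)
  finally show ?thesis .
qed

lemma integrable_lborel_shift: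
  fixes f :: "real \<Rightarrow> 'a::{banach, second_countable_topology}"
  assumes "integrable lborel f"
  shows "integrable lborel (\<lambda>x. f (x - a))"
  using lborel_integrable_real_affine[OF assms, of 1 "- a"] by simp

lemma fourier_tr_shift:
  assumes "integrable lborel f"
  shows "fourier_tr (\<lambda>x. f (x - a)) u = exp (\<i> * complex_of_real (u * a)) * fourier_tr f u"
proof -
  let ?k = "\<lambda>x. exp (\<i> * complex_of_real (x * u)) * complex_of_real (f (x - a))"
  have "fourier_tr (\<lambda>x. f (x - a)) u = (LINT x|lborel. ?k (a + 1 * x))"
    unfolding fourier_tr_def using lborel_integral_real_affine[of 1 ?k a] by simp
  also have "\<dots> = (LINT x|lborel. exp (\<i> * complex_of_real (u * a))
      * (exp (\<i> * complex_of_real (x * u)) * complex_of_real (f x)))"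
    by (simp add: exp_add[symmetric] algebra_simps)
  finally show ?thesis
    unfolding fourier_tr_def by simp
qed

lemma fourier_tr_mixture:
  assumes "integrable lborel f"
  shows "fourier_tr (\<lambda>x. p * f (x - a) + (1 - p) * f (x - b)) u = mix_M (p, a, b) u * fourier_tr f u"
  by (simp only: fourier_tr_lincomb[OF integrable_lborel_shift integrable_lborel_shift]
      fourier_tr_shift assms) (simp add: mix_M_def algebra_simps)

lemma fourier_tr_even_real:
  assumes "\<And>x. f (- x) = f x"
  shows "fourier_tr f u \<in> \<real>"
proof -
  let ?k = "\<lambda>x. exp (- (\<i> * complex_of_real (x * u))) * complex_of_real (f x)"
  have "cnj (fourier_tr f u) = (LINT x|lborel. ?k x)"
    unfolding fourier_tr_def by (simp flip: Bochner_Integration.integral_cnj add: exp_cnj)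
  also have "\<dots> = (LINT x|lborel. ?k (0 + (- 1) * x))"
    using lborel_integral_real_affine[of "- 1" ?k 0] by simp
  also have "\<dots> = fourier_tr f u"
    unfolding fourier_tr_def by (simp add: assms)
  finally show ?thesis
    by (simp add: Reals_cnj_iff)
qed

lemma isCont_fourier_tr:
  assumes "integrable lborel f"
  shows "isCont (fourier_tr f) u"
  unfolding continuous_at_sequentially
proof (intro allI impI)
  fix U assume "U \<longlonglongrightarrow> u"
  then show "(fourier_tr f \<circ> U) \<longlonglongrightarrow> fourier_tr f u"
    unfolding comp_def fourier_tr_def
    using assms borel_measurable_integrable[OF assms]
    by (intro integral_dominated_convergence[where w = "\<lambda>x. \<bar>f x\<bar>"])
       (auto intro!: tendsto_intros simp: norm_mult norm_exp_i_times)
qed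

lemma fourier_tr_0: "fourier_tr f 0 = complex_of_real (LINT x|lborel. f x)"
  by (simp add: fourier_tr_def)

text \<open>No hypothesis \<open>w \<noteq> 0\<close> is needed: for \<open>w = 0\<close> both sides hold since \<open>z / 0 = 0\<close>.\<close>

lemma Im_divide_eq_0_iff:
  fixes z w :: complex
  shows "Im (z / w) = 0 \<longleftrightarrow> Im (z * cnj w) = 0"
  by (cases "w = 0") (auto simp: Im_divide complex_eq_iff)

lemma Im_real_mult_eq_0_iff:
  fixes z w :: complex
  assumes "z \<in> \<real>"
  shows "Im (z * w) = 0 \<longleftrightarrow> z = 0 \<or> Im w = 0"
  using assms by (auto elim: Reals_cases)

lemma sinh_sum_zero_if_sin_sum_zero_near_0:
  fixes cs :: "(real \<times> real) list"
  assumes "\<epsilon> > 0" and sin_sum: "\<And>u. \<bar>u\<bar> < \<epsilon> \<Longrightarrow> (\<Sum>(c, d)\<leftarrow>cs. c * sin (d * u)) = 0"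
  shows "(\<Sum>(c, d)\<leftarrow>cs. c * sinh (d * y)) = 0"
proof -
  define G where "G z = (\<Sum>(c, d)\<leftarrow>cs. complex_of_real c * sin (complex_of_real d * z))" for z
  have G_real: "G (complex_of_real u) = complex_of_real (\<Sum>(c, d)\<leftarrow>cs. c * sin (d * u))" for u
    unfolding G_def by (induction cs) (auto simp: sin_of_real[symmetric])
  have G_imag: "G (\<i> * complex_of_real y) = \<i> * complex_of_real (\<Sum>(c, d)\<leftarrow>cs. c * sinh (d * y))"
  proof -
    have "sin (\<i> * complex_of_real t) = \<i> * complex_of_real (sinh t)" for t
      by (simp add: sin_i_times sinh_field_def exp_of_real exp_minus)
    then have "sin (complex_of_real d * (\<i> * complex_of_real y)) = \<i> * complex_of_real (sinh (d * y))" for d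
      by (metis mult.left_commute of_real_mult)
    then show ?thesis
      unfolding G_def by (induction cs) (auto simp: algebra_simps)
  qed
  have holo: "G holomorphic_on UNIV"
    unfolding G_def by (induction cs) (auto intro!: holomorphic_intros)
  have limpt: "0 islimpt complex_of_real ` {-\<epsilon><..<\<epsilon>}"
  proof -
    have "(0::real) islimpt {-\<epsilon><..<\<epsilon>}"
      using \<open>\<epsilon> > 0\<close> by (intro interior_limit_point) auto
    then show ?thesis
      using islimpt_isCont_image[of 0 _ complex_of_real] by (simp add: eventually_at_filter)
  qed
  have "G (\<i> * complex_of_real y) = 0"
  proof (rule analytic_continuation[OF holo open_UNIV connected_UNIV subset_UNIV UNIV_I limpt])
    show "G z = 0" if "z \<in> complex_of_real ` {-\<epsilon><..<\<epsilon>}" for z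
      using that by (auto simp: G_real sin_sum)
  qed simp
  then show ?thesis by (simp add: G_imag)
qed

lemma sinh_times_exp_tendsto:
  fixes d R :: real
  assumes "\<bar>d\<bar> \<le> R"
  shows "((\<lambda>y. sinh (d * y) * exp (- (R * y))) \<longlongrightarrow> (if \<bar>d\<bar> = R then sgn d / 2 else 0)) at_top"
proof -
  have eq: "sinh (d * y) * exp (- (R * y)) = (exp ((d - R) * y) - exp ((- d - R) * y)) / 2" for y
    by (simp add: sinh_def exp_add[symmetric] algebra_simps)
  have "((\<lambda>y. (exp ((d - R) * y) - exp ((- d - R) * y)) / 2)
          \<longlongrightarrow> (if \<bar>d\<bar> = R then sgn d / 2 else 0)) at_top"
  proof -
    consider "d = R" "R > 0" | "d = - R" "R > 0" | "\<bar>d\<bar> < R" | "d = 0" "R = 0"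
      using assms by linarith
    then show ?thesis
    proof cases
      case 1 then show ?thesis by simp real_asymp
    next
      case 2 then show ?thesis by simp real_asymp
    next
      case 3
      then have "d - R < 0" "- d - R < 0" by auto
      then have "((\<lambda>y. exp ((d - R) * y)) \<longlongrightarrow> 0) at_top"
        "((\<lambda>y. exp ((- d - R) * y)) \<longlongrightarrow> 0) at_top" by real_asymp+
      with 3 show ?thesis by (auto intro: tendsto_eq_intros)
    qed simp
  qed
  then show ?thesis unfolding eq .
qed

lemma Im_mix_M_mult_cnj:
  "Im (mix_M (q0, h0, l0) u * cnj (mix_M (q, h, l) u)) =
     q0 * q * sin ((h0 - h) * u) + q0 * (1 - q) * sin ((h0 - l) * u)
   + (1 - q0) * q * sin ((l0 - h) * u) + (1 - q0) * (1 - q) * sin ((l0 - l) * u)"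
  by (simp add: mix_M_def exp_eq_polar sin_diff algebra_simps cos_of_real sin_of_real)

lemma mix_params_eq_if_sinh_sum_zero:
  fixes q h l q0 h0 l0 :: real
  assumes "l < h" "l0 < h0" "0 < q" "q < 1" "0 < q0" "q0 < 1" "q \<noteq> 1/2"
    and sinh_sum: "\<And>y. q0 * q * sinh ((h0 - h) * y) + q0 * (1 - q) * sinh ((h0 - l) * y)
      + (1 - q0) * q * sinh ((l0 - h) * y) + (1 - q0) * (1 - q) * sinh ((l0 - l) * y) = 0"
  shows "(q, h, l) = (q0, h0, l0)"
proof -
  \<comment> \<open>Only the exponents \<open>h0 - l\<close> and \<open>l0 - h\<close> can reach modulus \<open>R\<close>, with coefficients of opposite signs.\<close>
  define R where "R = max (h0 - l) (h - l0)"
  define L where "L d = (if \<bar>d\<bar> = R then sgn d / 2 else 0)" for d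
  have bounds: "\<bar>h0 - h\<bar> < R" "\<bar>h0 - l\<bar> \<le> R" "\<bar>l0 - h\<bar> \<le> R" "\<bar>l0 - l\<bar> < R"
    using assms(1,2) by (auto simp: R_def)
  have "((\<lambda>y. q0 * q * (sinh ((h0 - h) * y) * exp (- (R * y)))
      + q0 * (1 - q) * (sinh ((h0 - l) * y) * exp (- (R * y)))
      + (1 - q0) * q * (sinh ((l0 - h) * y) * exp (- (R * y)))
      + (1 - q0) * (1 - q) * (sinh ((l0 - l) * y) * exp (- (R * y))))
    \<longlongrightarrow> q0 * q * L (h0 - h) + q0 * (1 - q) * L (h0 - l)
      + (1 - q0) * q * L (l0 - h) + (1 - q0) * (1 - q) * L (l0 - l)) at_top"
    unfolding L_def using bounds by (intro tendsto_intros sinh_times_exp_tendsto) auto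
  moreover have "(\<lambda>y. q0 * q * (sinh ((h0 - h) * y) * exp (- (R * y)))
      + q0 * (1 - q) * (sinh ((h0 - l) * y) * exp (- (R * y)))
      + (1 - q0) * q * (sinh ((l0 - h) * y) * exp (- (R * y)))
      + (1 - q0) * (1 - q) * (sinh ((l0 - l) * y) * exp (- (R * y)))) = (\<lambda>y. 0)"
    using sinh_sum by (simp add: fun_eq_iff distrib_left[symmetric] mult.assoc[symmetric] distrib_right[symmetric])
  ultimately have "q0 * q * L (h0 - h) + q0 * (1 - q) * L (h0 - l)
      + (1 - q0) * q * L (l0 - h) + (1 - q0) * (1 - q) * L (l0 - l) = 0"
    by (metis tendsto_const_iff trivial_limit_at_top_linorder)
  then have "q0 * (1 - q) * L (h0 - l) + (1 - q0) * q * L (l0 - h) = 0"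
    using bounds by (simp add: L_def)
  moreover have "q0 * (1 - q) > 0" "(1 - q0) * q > 0"
    using assms(3-6) by auto
  ultimately have R_eq: "h0 - l = R" "h - l0 = R" "q0 * (1 - q) = (1 - q0) * q"
    using assms(1,2) by (auto simp: L_def R_def max_def sgn_if split: if_splits)
  then have "q = q0" by (simp add: algebra_simps)
  have "l0 - l = - (h0 - h)" "l0 - h = - (h0 - l)"
    using R_eq by simp_all
  then have "sinh (l0 - l) = - sinh (h0 - h)" "sinh (l0 - h) = - sinh (h0 - l)"
    by (simp_all only: sinh_minus)
  then have "(2 * q - 1) * sinh (h0 - h) = 0"
    using sinh_sum[of 1] \<open>q = q0\<close> by (simp add: algebra_simps)
  with \<open>q \<noteq> 1/2\<close> have "h = h0" by simp
  with R_eq \<open>q = q0\<close> show ?thesis by simp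
qed

text \<open>\<open>(p, a, b)\<close> and \<open>(1 - p, b, a)\<close> describe the same mixture; pick the one whose first location is larger.\<close>

definition ordered_mix_param :: "real \<times> real \<times> real \<Rightarrow> real \<times> real \<times> real" where
  "ordered_mix_param = (\<lambda>(p, a, b). if b < a then (p, a, b) else (1 - p, b, a))"

lemma mix_M_ordered_mix_param: "mix_M (ordered_mix_param \<theta>) = mix_M \<theta>"
  by (auto simp: ordered_mix_param_def mix_M_def fun_eq_iff split: prod.split)

lemma inj_on_ordered_mix_param: "inj_on ordered_mix_param {\<theta>. fst \<theta> < 1/2}"
  by (auto simp: inj_on_def ordered_mix_param_def split: if_splits)

lemma ordered_mix_param_bounds:
  assumes "\<theta> \<in> {(p, a, b). 0 < p \<and> p < 1/2 \<and> a \<noteq> b}" and "ordered_mix_param \<theta> = (q, h, l)"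
  shows "l < h" "0 < q" "q < 1" "q \<noteq> 1/2"
  using assms by (auto simp: ordered_mix_param_def split: if_splits prod.splits)

lemma mix_param_eq_if_Im_mult_cnj_zero_near_0:
  assumes \<theta>: "\<theta> \<in> {(p, a, b). 0 < p \<and> p < 1/2 \<and> a \<noteq> b}"
    and \<theta>0: "\<theta>0 \<in> {(p, a, b). 0 < p \<and> p < 1/2 \<and> a \<noteq> b}"
    and "\<epsilon> > 0" and Im_zero: "\<And>u. \<bar>u\<bar> < \<epsilon> \<Longrightarrow> Im (mix_M \<theta>0 u * cnj (mix_M \<theta> u)) = 0"
  shows "\<theta> = \<theta>0"
proof -
  obtain q h l where qhl: "ordered_mix_param \<theta> = (q, h, l)"
    by (metis prod_cases3)
  obtain q0 h0 l0 where qhl0: "ordered_mix_param \<theta>0 = (q0, h0, l0)"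
    by (metis prod_cases3)
  note bounds = ordered_mix_param_bounds[OF \<theta> qhl] ordered_mix_param_bounds[OF \<theta>0 qhl0]
  have "mix_M \<theta> = mix_M (q, h, l)" "mix_M \<theta>0 = mix_M (q0, h0, l0)"
    by (metis mix_M_ordered_mix_param qhl qhl0)+
  then have "Im (mix_M (q0, h0, l0) u * cnj (mix_M (q, h, l) u)) = 0" if "\<bar>u\<bar> < \<epsilon>" for u
    using Im_zero[OF that] by simp
  then have "q0 * q * sin ((h0 - h) * u) + q0 * (1 - q) * sin ((h0 - l) * u)
      + (1 - q0) * q * sin ((l0 - h) * u) + (1 - q0) * (1 - q) * sin ((l0 - l) * u) = 0"
    if "\<bar>u\<bar> < \<epsilon>" for u
    using that by (simp only: Im_mix_M_mult_cnj)
  then have "(\<Sum>(c, d)\<leftarrow>[(q0 * q, h0 - h), (q0 * (1 - q), h0 - l), ((1 - q0) * q, l0 - h),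
      ((1 - q0) * (1 - q), l0 - l)]. c * sinh (d * y)) = 0" for y
    by (intro sinh_sum_zero_if_sin_sum_zero_near_0[OF \<open>\<epsilon> > 0\<close>]) (simp add: add.assoc)
  then have "(q, h, l) = (q0, h0, l0)"
    using bounds by (intro mix_params_eq_if_sinh_sum_zero) (auto simp: add.assoc)
  then have "ordered_mix_param \<theta> = ordered_mix_param \<theta>0"
    using qhl qhl0 by simp
  then show ?thesis
    by (rule inj_onD[OF inj_on_ordered_mix_param]) (use \<theta> \<theta>0 in auto)
qed

theorem theorem1:
  fixes f :: "real \<Rightarrow> real"
    and \<Theta> :: "(real \<times> real \<times> real) set"
    and p0 \<alpha>0 \<beta>0 :: real
    and g :: "real \<Rightarrow> real"
  assumes dens: "prob_density f"
    and L2: "square_integrable f"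
    and symm: "\<forall>x. f x = f (- x)"
    and compact: "compact \<Theta>"
    and sub: "\<Theta> \<subseteq> {(p, \<alpha>, \<beta>). 0 < p \<and> p < 1/2 \<and> \<alpha> \<noteq> \<beta>}"
    and th0: "(p0, \<alpha>0, \<beta>0) \<in> \<Theta>"
    and g_def: "\<forall>x. g x = p0 * f (x - \<alpha>0) + (1 - p0) * f (x - \<beta>0)"
    and th: "\<theta> \<in> \<Theta>"
  shows "(\<forall>u. Im (fourier_tr g u / mix_M \<theta> u) = 0) \<longleftrightarrow> \<theta> = (p0, \<alpha>0, \<beta>0)"
proof -
  have int: "integrable lborel f" and total: "(LINT x|lborel. f x) = 1"
    using dens by (auto simp: prob_density_def)
  have "g = (\<lambda>x. p0 * f (x - \<alpha>0) + (1 - p0) * f (x - \<beta>0))"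
    using g_def by auto
  then have "fourier_tr g u / mix_M \<theta> u = fourier_tr f u * (mix_M (p0, \<alpha>0, \<beta>0) u / mix_M \<theta> u)" for u
    using fourier_tr_mixture[OF int] by (simp add: mult.commute)
  moreover have "fourier_tr f u \<in> \<real>" for u
    using symm by (intro fourier_tr_even_real) metis
  ultimately have Im_eq_0_iff: "Im (fourier_tr g u / mix_M \<theta> u) = 0 \<longleftrightarrow>
      fourier_tr f u = 0 \<or> Im (mix_M (p0, \<alpha>0, \<beta>0) u * cnj (mix_M \<theta> u)) = 0" for u
    by (simp only: Im_real_mult_eq_0_iff Im_divide_eq_0_iff)
  obtain \<epsilon> where "\<epsilon> > 0" and nonzero: "\<And>u. \<bar>u\<bar> < \<epsilon> \<Longrightarrow> fourier_tr f u \<noteq> 0"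
    using continuous_at_avoid[OF isCont_fourier_tr[OF int, of 0], of 0]
    by (auto simp: fourier_tr_0 total dist_real_def)
  show ?thesis
  proof
    assume "\<forall>u. Im (fourier_tr g u / mix_M \<theta> u) = 0"
    then have "Im (mix_M (p0, \<alpha>0, \<beta>0) u * cnj (mix_M \<theta> u)) = 0" if "\<bar>u\<bar> < \<epsilon>" for u
      using Im_eq_0_iff nonzero[OF that] by blast
    with sub th th0 show "\<theta> = (p0, \<alpha>0, \<beta>0)"
      by (intro mix_param_eq_if_Im_mult_cnj_zero_near_0[OF _ _ \<open>\<epsilon> > 0\<close>]) auto
  next
    show "\<forall>u. Im (fourier_tr g u / mix_M \<theta> u) = 0" if "\<theta> = (p0, \<alpha>0, \<beta>0)"
      unfolding Im_eq_0_iff using that by simp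
  qed
qed

end
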